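(* Let $\mathbf{C}$ be a category enriched over $\mathbf{Top}$ and let $\mathfrak{G} = (G_A)_{A \in \mathrm{Ob}(\mathbf{C})}$ be a family of groups with $G_A \le \mathrm{Aut}_\mathbf{C}(A)$ for all $A$. Let $A, S \in \mathrm{Ob}(\mathbf{C})$ be such that $\hom(A,S)$ is locally compact second-countable Hausdorff and $\mathrm{Aut}_\mathbf{C}(A)$ is a finite discrete group, and let $q_{AS} : \hom(A,S) \to \binom{S}{A}_\mathfrak{G}$, $f \mapsto f/{\sim_\mathfrak{G}}$, be the quotient map. Then for every Borel set $W \subseteq \hom(A,S)$, the set $q_{AS}(W)$ is Borel in $\binom{S}{A}_\mathfrak{G}$.
   Context: A category is enriched over $\mathbf{Top}$ if each homset is a topological space and composition is continuous. $\mathrm{Aut}_\mathbf{C}(A)$ is the group of invertible morphisms $A \to A$ (with the topology inherited from $\hom(A,A)$). For $f, g \in \hom(A,S)$, $f \sim_\mathfrak{G} g$ iff $f = g \cdot \alpha$ for some $\alpha \in G_A$; $\binom{S}{A}_\mathfrak{G} = \hom(A,S)/{\sim_\mathfrak{G}}$ carries the quotient topology (the finest topology making $q_{AS}$ continuous). *)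

theory Defs
  imports "HOL-Analysis.Analysis"
begin

definition top_enriched_category ::
  "'o set \<Rightarrow> ('o \<Rightarrow> 'o \<Rightarrow> 'm set) \<Rightarrow> ('m \<Rightarrow> 'm \<Rightarrow> 'm) \<Rightarrow> ('o \<Rightarrow> 'm)
   \<Rightarrow> ('o \<Rightarrow> 'o \<Rightarrow> 'm topology) \<Rightarrow> bool" where
  "top_enriched_category Ob hom cmp ident T \<longleftrightarrow>
     (\<forall>A\<in>Ob. ident A \<in> hom A A) \<and>
     (\<forall>A\<in>Ob. \<forall>B\<in>Ob. \<forall>C\<in>Ob. \<forall>f\<in>hom A B. \<forall>g\<in>hom B C. cmp g f \<in> hom A C) \<and>
     (\<forall>A\<in>Ob. \<forall>B\<in>Ob. \<forall>C\<in>Ob. \<forall>D\<in>Ob. \<forall>f\<in>hom A B. \<forall>g\<in>hom B C. \<forall>h\<in>hom C D.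
        cmp h (cmp g f) = cmp (cmp h g) f) \<and>
     (\<forall>A\<in>Ob. \<forall>B\<in>Ob. \<forall>f\<in>hom A B. cmp (ident B) f = f \<and> cmp f (ident A) = f) \<and>
     (\<forall>A\<in>Ob. \<forall>B\<in>Ob. topspace (T A B) = hom A B) \<and>
     (\<forall>A\<in>Ob. \<forall>B\<in>Ob. \<forall>C\<in>Ob.
        continuous_map (prod_topology (T B C) (T A B)) (T A C) (\<lambda>(g, f). cmp g f))"

definition Aut :: "('o \<Rightarrow> 'o \<Rightarrow> 'm set) \<Rightarrow> ('m \<Rightarrow> 'm \<Rightarrow> 'm) \<Rightarrow> ('o \<Rightarrow> 'm) \<Rightarrow> 'o \<Rightarrow> 'm set" where
  "Aut hom cmp ident A =
     {f \<in> hom A A. \<exists>g\<in>hom A A. cmp g f = ident A \<and> cmp f g = ident A}"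

definition aut_subgroup ::
  "('o \<Rightarrow> 'o \<Rightarrow> 'm set) \<Rightarrow> ('m \<Rightarrow> 'm \<Rightarrow> 'm) \<Rightarrow> ('o \<Rightarrow> 'm) \<Rightarrow> 'o \<Rightarrow> 'm set \<Rightarrow> bool" where
  "aut_subgroup hom cmp ident A H \<longleftrightarrow>
     H \<subseteq> Aut hom cmp ident A \<and> ident A \<in> H \<and>
     (\<forall>f\<in>H. \<forall>g\<in>H. cmp g f \<in> H) \<and>
     (\<forall>f\<in>H. \<exists>g\<in>H. cmp g f = ident A \<and> cmp f g = ident A)"

definition grel :: "('m \<Rightarrow> 'm \<Rightarrow> 'm) \<Rightarrow> 'm set \<Rightarrow> 'm \<Rightarrow> 'm \<Rightarrow> bool" where
  "grel cmp GA f g \<longleftrightarrow> (\<exists>\<alpha>\<in>GA. f = cmp g \<alpha>)"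

definition qmap :: "'m set \<Rightarrow> ('m \<Rightarrow> 'm \<Rightarrow> 'm) \<Rightarrow> 'm set \<Rightarrow> 'm \<Rightarrow> 'm set" where
  "qmap H cmp GA f = {g \<in> H. grel cmp GA f g}"

definition quot_topology :: "'a topology \<Rightarrow> ('a \<Rightarrow> 'b) \<Rightarrow> 'b topology" where
  "quot_topology X q =
     topology (\<lambda>U. U \<subseteq> q ` topspace X \<and> openin X {x \<in> topspace X. q x \<in> U})"

definition borel_sets_of :: "'a topology \<Rightarrow> 'a set set" where
  "borel_sets_of X = sigma_sets (topspace X) {U. openin X U}"

end

(*
  Precomposition with the finite group G = G_A acts continuously on X = hom(A, S), and
  q(W) is the set of classes [f] for which f \<circ> \<alpha> \<in> W for some \<alpha> \<in> G.  Although the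
  saturation q^-1(q(W)) is Borel, this alone need not make q(W) Borel in the quotient
  topology, so instead of sets we push functions down: N_W(f) = #{\<alpha> \<in> G. f \<circ> \<alpha> \<in> W} is
  constant on classes and q(W) = {N_W > 0}.  For open W, N_W is lower semicontinuous and
  hence descends to a Borel function on the quotient; the W for which this holds form a
  Dynkin system (N is additive in W), so Dynkin's lemma covers all Borel W.
*)

theory Submission
  imports Defs
begin

lemma openin_quot_topology:
  "openin (quot_topology X q) U \<longleftrightarrow>
     U \<subseteq> q ` topspace X \<and> openin X {x \<in> topspace X. q x \<in> U}"
proof -
  have "istopology (\<lambda>U. U \<subseteq> q ` topspace X \<and> openin X {x \<in> topspace X. q x \<in> U})"
  proof (unfold istopology_def, rule conjI; intro allI impI)
    fix U V
    assume "U \<subseteq> q ` topspace X \<and> openin X {x \<in> topspace X. q x \<in> U}"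
      and "V \<subseteq> q ` topspace X \<and> openin X {x \<in> topspace X. q x \<in> V}"
    moreover have "{x \<in> topspace X. q x \<in> U \<inter> V} =
                     {x \<in> topspace X. q x \<in> U} \<inter> {x \<in> topspace X. q x \<in> V}"
      by auto
    ultimately show "U \<inter> V \<subseteq> q ` topspace X \<and> openin X {x \<in> topspace X. q x \<in> U \<inter> V}"
      by auto
  next
    fix \<U>
    assume "\<forall>U\<in>\<U>. U \<subseteq> q ` topspace X \<and> openin X {x \<in> topspace X. q x \<in> U}"
    moreover have "{x \<in> topspace X. q x \<in> \<Union>\<U>} = (\<Union>U\<in>\<U>. {x \<in> topspace X. q x \<in> U})"
      by auto
    ultimately show "\<Union>\<U> \<subseteq> q ` topspace X \<and> openin X {x \<in> topspace X. q x \<in> \<Union>\<U>}"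
      by auto
  qed
  then show ?thesis
    unfolding quot_topology_def by (simp only: topology_inverse')
qed

lemma topspace_quot_topology: "topspace (quot_topology X q) = q ` topspace X"
proof
  show "topspace (quot_topology X q) \<subseteq> q ` topspace X"
    using openin_quot_topology[of X q "topspace (quot_topology X q)"] by simp
  have "{x \<in> topspace X. q x \<in> q ` topspace X} = topspace X"
    by blast
  then have "openin (quot_topology X q) (q ` topspace X)"
    by (simp add: openin_quot_topology)
  then show "q ` topspace X \<subseteq> topspace (quot_topology X q)"
    by (rule openin_subset)
qed

lemma quotient_map_quot_topology: "quotient_map X (quot_topology X q) q"
  by (simp add: quotient_map_def topspace_quot_topology openin_quot_topology)

definition borel_measure_of :: "'a topology \<Rightarrow> 'a measure" where
  "borel_measure_of X = sigma (topspace X) {U. openin X U}"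

lemma
  shows space_borel_measure_of [simp]: "space (borel_measure_of X) = topspace X"
    and sets_borel_measure_of [simp]: "sets (borel_measure_of X) = borel_sets_of X"
proof -
  have "{U. openin X U} \<subseteq> Pow (topspace X)"
    by (auto dest: openin_subset)
  then show "space (borel_measure_of X) = topspace X"
    and "sets (borel_measure_of X) = borel_sets_of X"
    by (simp_all add: borel_measure_of_def borel_sets_of_def)
qed

definition hit_count :: "'i set \<Rightarrow> ('i \<Rightarrow> 'a \<Rightarrow> 'b) \<Rightarrow> 'b set \<Rightarrow> 'a \<Rightarrow> ennreal" where
  "hit_count I \<phi> B x = (\<Sum>i\<in>I. indicator B (\<phi> i x))"

lemma hit_count_eq_card:
  assumes "finite I"
  shows "hit_count I \<phi> B x = of_nat (card {i \<in> I. \<phi> i x \<in> B})"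
proof -
  have "hit_count I \<phi> B x = (\<Sum>i\<in>I. indicator {i. \<phi> i x \<in> B} i)"
    unfolding hit_count_def by (intro sum.cong) (auto simp: indicator_def)
  also have "\<dots> = of_nat (card (I \<inter> {i. \<phi> i x \<in> B}))"
    using assms by (simp add: indicator_def)
  also have "I \<inter> {i. \<phi> i x \<in> B} = {i \<in> I. \<phi> i x \<in> B}"
    by blast
  finally show ?thesis .
qed

lemma hit_count_pos_iff:
  "finite I \<Longrightarrow> 0 < hit_count I \<phi> B x \<longleftrightarrow> (\<exists>i\<in>I. \<phi> i x \<in> B)"
  by (auto simp: hit_count_eq_card card_gt_0_iff)

lemma hit_count_empty [simp]: "hit_count I \<phi> {} x = 0"
  by (simp add: hit_count_def)

lemma hit_count_Diff_add:
  assumes "\<And>i. i \<in> I \<Longrightarrow> \<phi> i x \<in> \<Omega>"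
  shows "hit_count I \<phi> (\<Omega> - B) x + hit_count I \<phi> B x = of_nat (card I)"
proof -
  have "hit_count I \<phi> (\<Omega> - B) x + hit_count I \<phi> B x = (\<Sum>i\<in>I. 1)"
    unfolding hit_count_def sum.distrib[symmetric]
    using assms by (intro sum.cong) (auto simp: indicator_def)
  then show ?thesis by simp
qed

lemma hit_count_UN_disjoint:
  "disjoint_family B \<Longrightarrow> hit_count I \<phi> (\<Union>n. B n) x = (\<Sum>n. hit_count I \<phi> (B n) x)"
proof -
  assume "disjoint_family B"
  then have "hit_count I \<phi> (\<Union>n. B n) x = (\<Sum>i\<in>I. \<Sum>n. indicator (B n) (\<phi> i x))"
    by (simp add: hit_count_def suminf_indicator)
  also have "\<dots> = (\<Sum>n. hit_count I \<phi> (B n) x)"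
    unfolding hit_count_def by (rule suminf_sum[symmetric]) simp
  finally show ?thesis .
qed

lemma openin_hit_count_greater:
  assumes "finite I" and cont: "\<And>i. i \<in> I \<Longrightarrow> continuous_map X X (\<phi> i)"
    and U: "openin X U"
  shows "openin X {x \<in> topspace X. t < hit_count I \<phi> U x}"
proof (subst openin_subopen, intro ballI)
  fix x assume x: "x \<in> {x \<in> topspace X. t < hit_count I \<phi> U x}"
  define J where "J = {i \<in> I. \<phi> i x \<in> U}"
  define V where "V = (\<Inter>i\<in>J. {y \<in> topspace X. \<phi> i y \<in> U}) \<inter> topspace X"
  have "openin X V"
    unfolding V_def using \<open>finite I\<close> cont U
    by (intro openin_INT) (auto simp: J_def intro: openin_continuous_map_preimage)
  moreover have "x \<in> V"
    using x by (auto simp: V_def J_def)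
  moreover have "V \<subseteq> {x \<in> topspace X. t < hit_count I \<phi> U x}"
  proof
    fix y assume y: "y \<in> V"
    then have "J \<subseteq> {i \<in> I. \<phi> i y \<in> U}"
      by (auto simp: V_def J_def)
    then have "hit_count I \<phi> U x \<le> hit_count I \<phi> U y"
      using \<open>finite I\<close> by (simp add: hit_count_eq_card J_def card_mono)
    then show "y \<in> {x \<in> topspace X. t < hit_count I \<phi> U x}"
      using x y by (auto simp: V_def)
  qed
  ultimately show "\<exists>V. openin X V \<and> x \<in> V \<and> V \<subseteq> {x \<in> topspace X. t < hit_count I \<phi> U x}"
    by blast
qed

lemma borel_measurable_hit_count_quotient_open:
  assumes q: "quotient_map X Y q" and "finite I"
    and cont: "\<And>i. i \<in> I \<Longrightarrow> continuous_map X X (\<phi> i)"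
    and count_inv: "\<And>x y. x \<in> topspace X \<Longrightarrow> y \<in> topspace X \<Longrightarrow> q x = q y \<Longrightarrow>
                        hit_count I \<phi> U x = hit_count I \<phi> U y"
    and U: "openin X U"
  shows "(\<lambda>y. hit_count I \<phi> U (inv_into (topspace X) q y)) \<in> borel_measurable (borel_measure_of Y)"
proof (rule borel_measurableI_greater)
  fix t
  let ?V = "{y \<in> topspace Y. t < hit_count I \<phi> U (inv_into (topspace X) q y)}"
  have q_onto: "q ` topspace X = topspace Y"
    using q by (simp add: quotient_map_def)
  have "hit_count I \<phi> U (inv_into (topspace X) q (q x)) = hit_count I \<phi> U x"
    if "x \<in> topspace X" for x
    using that by (intro count_inv inv_into_into f_inv_into_f) auto
  then have "{x \<in> topspace X. q x \<in> ?V} = {x \<in> topspace X. t < hit_count I \<phi> U x}"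
    using q_onto by auto
  moreover have "openin Y V \<longleftrightarrow> openin X {x \<in> topspace X. q x \<in> V}"
    if "V \<subseteq> topspace Y" for V
    using q that by (simp add: quotient_map_def)
  ultimately have "openin Y ?V"
    using openin_hit_count_greater[OF \<open>finite I\<close> cont U] by simp
  then show "{y \<in> space (borel_measure_of Y). t < hit_count I \<phi> U (inv_into (topspace X) q y)}
               \<in> sets (borel_measure_of Y)"
    unfolding space_borel_measure_of sets_borel_measure_of borel_sets_of_def
    by auto
qed

lemma borel_measurable_hit_count_quotient:
  assumes q: "quotient_map X Y q" and "finite I"
    and cont: "\<And>i. i \<in> I \<Longrightarrow> continuous_map X X (\<phi> i)"
    and count_inv: "\<And>B x y. x \<in> topspace X \<Longrightarrow> y \<in> topspace X \<Longrightarrow> q x = q y \<Longrightarrow>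
                          hit_count I \<phi> B x = hit_count I \<phi> B y"
    and B: "B \<in> borel_sets_of X"
  shows "(\<lambda>y. hit_count I \<phi> B (inv_into (topspace X) q y)) \<in> borel_measurable (borel_measure_of Y)"
proof -
  let ?r = "inv_into (topspace X) q"
  have r_in: "\<phi> i (?r y) \<in> topspace X" if "i \<in> I" "y \<in> space (borel_measure_of Y)" for i y
  proof -
    have "?r y \<in> topspace X"
      using q that(2) by (simp add: quotient_map_def inv_into_into)
    then show ?thesis
      using continuous_map_image_subset_topspace[OF cont[OF that(1)]] by blast
  qed
  have "Int_stable {U. openin X U}"
    by (auto simp: Int_stable_def)
  moreover have "{U. openin X U} \<subseteq> Pow (topspace X)"
    by (auto dest: openin_subset)
  ultimately show ?thesis
    using B unfolding borel_sets_of_def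
  proof (induction rule: sigma_sets_induct_disjoint)
    case (basic U)
    then have "openin X U"
      by simp
    with q \<open>finite I\<close> cont count_inv show ?case
      by (rule borel_measurable_hit_count_quotient_open)
  next
    case empty
    then show ?case by simp
  next
    case (compl B)
    have complement:
      "hit_count I \<phi> (topspace X - B) (?r y) = of_nat (card I) - hit_count I \<phi> B (?r y)"
      if y: "y \<in> space (borel_measure_of Y)" for y
    proof -
      have hits: "hit_count I \<phi> (topspace X - B) (?r y) + hit_count I \<phi> B (?r y) = of_nat (card I)"
        by (rule hit_count_Diff_add) (rule r_in[OF _ y])
      have "hit_count I \<phi> B (?r y) \<noteq> top"
        using \<open>finite I\<close> by (simp add: hit_count_eq_card)
      then show ?thesis
        unfolding hits[symmetric] by (rule ennreal_add_diff_cancel_right[symmetric])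
    qed
    have "(\<lambda>y. hit_count I \<phi> (topspace X - B) (?r y)) \<in> borel_measurable (borel_measure_of Y) \<longleftrightarrow>
          (\<lambda>y. of_nat (card I) - hit_count I \<phi> B (?r y)) \<in> borel_measurable (borel_measure_of Y)"
      by (rule measurable_cong) (rule complement)
    with compl show ?case
      by (auto intro: borel_measurable_minus_ennreal)
  next
    case (union B)
    then show ?case
      by (simp add: hit_count_UN_disjoint borel_measurable_suminf_order)
  qed
qed

theorem borel_sets_image_quotient_finite_action:
  assumes q: "quotient_map X Y q" and "finite I"
    and cont: "\<And>i. i \<in> I \<Longrightarrow> continuous_map X X (\<phi> i)"
    and q_\<phi>: "\<And>i x. i \<in> I \<Longrightarrow> x \<in> topspace X \<Longrightarrow> q (\<phi> i x) = q x"
    and orbit: "\<And>x y. x \<in> topspace X \<Longrightarrow> y \<in> topspace X \<Longrightarrow> q x = q y \<Longrightarrow> \<exists>i\<in>I. \<phi> i x = y"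
    and count_inv: "\<And>B x y. x \<in> topspace X \<Longrightarrow> y \<in> topspace X \<Longrightarrow> q x = q y \<Longrightarrow>
                          hit_count I \<phi> B x = hit_count I \<phi> B y"
    and B: "B \<in> borel_sets_of X"
  shows "q ` B \<in> borel_sets_of Y"
proof -
  let ?r = "inv_into (topspace X) q"
  let ?f = "\<lambda>y. hit_count I \<phi> B (?r y)"
  have q_onto: "q ` topspace X = topspace Y"
    using q by (simp add: quotient_map_def)
  have B_sub: "B \<subseteq> topspace X"
    using B sigma_sets_into_sp[of "{U. openin X U}" "topspace X"]
    by (auto simp: borel_sets_of_def dest: openin_subset)
  have image_eq: "q ` B = {y \<in> topspace Y. 0 < ?f y}"
  proof (intro set_eqI iffI)
    fix y assume "y \<in> q ` B"
    then obtain x where x: "x \<in> B" "y = q x" by blast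
    then have "?r y \<in> topspace X" "q (?r y) = q x"
      using B_sub by (auto intro: inv_into_into f_inv_into_f)
    then obtain i where "i \<in> I" "\<phi> i (?r y) = x"
      using orbit x B_sub by blast
    then have "0 < ?f y"
      using x(1) \<open>finite I\<close> by (auto simp: hit_count_pos_iff)
    moreover have "y \<in> topspace Y"
      using x B_sub q_onto by blast
    ultimately show "y \<in> {y \<in> topspace Y. 0 < ?f y}"
      by blast
  next
    fix y assume y: "y \<in> {y \<in> topspace Y. 0 < ?f y}"
    then obtain i where i: "i \<in> I" "\<phi> i (?r y) \<in> B"
      using \<open>finite I\<close> by (auto simp: hit_count_pos_iff)
    have "y = q (?r y)" "?r y \<in> topspace X"
      using y q_onto by (auto intro: inv_into_into f_inv_into_f[symmetric])
    then have "y = q (\<phi> i (?r y))"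
      using q_\<phi> i(1) by simp
    then show "y \<in> q ` B"
      using i(2) by blast
  qed
  have "?f \<in> borel_measurable (borel_measure_of Y)"
    using q \<open>finite I\<close> cont count_inv B by (rule borel_measurable_hit_count_quotient)
  then have "{y \<in> space (borel_measure_of Y). 0 < ?f y} \<in> sets (borel_measure_of Y)"
    by measurable
  with image_eq show ?thesis
    by simp
qed

locale top_enriched =
  fixes Ob :: "'o set" and hom :: "'o \<Rightarrow> 'o \<Rightarrow> 'm set"
    and cmp :: "'m \<Rightarrow> 'm \<Rightarrow> 'm" and ident :: "'o \<Rightarrow> 'm"
    and T :: "'o \<Rightarrow> 'o \<Rightarrow> 'm topology"
  assumes cat: "top_enriched_category Ob hom cmp ident T"
begin

lemma cmp_assoc:
  "A \<in> Ob \<Longrightarrow> B \<in> Ob \<Longrightarrow> C \<in> Ob \<Longrightarrow> D \<in> Ob \<Longrightarrow> f \<in> hom A B \<Longrightarrow> g \<in> hom B C \<Longrightarrow>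
     h \<in> hom C D \<Longrightarrow> cmp h (cmp g f) = cmp (cmp h g) f"
  using cat unfolding top_enriched_category_def by (elim conjE) blast

lemma cmp_ident_right: "A \<in> Ob \<Longrightarrow> B \<in> Ob \<Longrightarrow> f \<in> hom A B \<Longrightarrow> cmp f (ident A) = f"
  using cat unfolding top_enriched_category_def by (elim conjE) blast

lemma cmp_ident_left: "A \<in> Ob \<Longrightarrow> B \<in> Ob \<Longrightarrow> f \<in> hom A B \<Longrightarrow> cmp (ident B) f = f"
  using cat unfolding top_enriched_category_def by (elim conjE) blast

lemma topspace_hom: "A \<in> Ob \<Longrightarrow> B \<in> Ob \<Longrightarrow> topspace (T A B) = hom A B"
  using cat unfolding top_enriched_category_def by (elim conjE) blast

lemma continuous_map_cmp:
  "A \<in> Ob \<Longrightarrow> B \<in> Ob \<Longrightarrow> C \<in> Ob \<Longrightarrow>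
     continuous_map (prod_topology (T B C) (T A B)) (T A C) (\<lambda>(g, f). cmp g f)"
  using cat by (simp add: top_enriched_category_def)

lemma continuous_map_precomp:
  assumes "A \<in> Ob" "B \<in> Ob" "a \<in> hom A A"
  shows "continuous_map (T A B) (T A B) (\<lambda>f. cmp f a)"
proof -
  have "continuous_map (T A B) (prod_topology (T A B) (T A A)) (\<lambda>f. (f, a))"
    using assms by (simp add: continuous_map_pairwise o_def topspace_hom)
  from continuous_map_compose[OF this continuous_map_cmp[OF assms(1,1,2)]]
  show ?thesis
    by (simp add: o_def)
qed

end

locale hom_quotient = top_enriched +
  fixes A S :: 'o and H :: "'m set"
  assumes A: "A \<in> Ob" and S: "S \<in> Ob"
    and subgroup: "aut_subgroup hom cmp ident A H"
begin

abbreviation q :: "'m \<Rightarrow> 'm set" where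
  "q \<equiv> qmap (hom A S) cmp H"

lemma subgroup_subset: "H \<subseteq> hom A A"
  using subgroup by (auto simp: aut_subgroup_def Aut_def)

lemma subgroup_inverse: "a \<in> H \<Longrightarrow> \<exists>a'\<in>H. cmp a' a = ident A \<and> cmp a a' = ident A"
  using subgroup by (simp add: aut_subgroup_def)

lemma ident_in_subgroup: "ident A \<in> H"
  using subgroup by (simp add: aut_subgroup_def)

lemma cmp_in_subgroup: "a \<in> H \<Longrightarrow> b \<in> H \<Longrightarrow> cmp a b \<in> H"
  using subgroup by (simp add: aut_subgroup_def)

lemma precomp_assoc:
  "f \<in> hom A S \<Longrightarrow> a \<in> H \<Longrightarrow> b \<in> H \<Longrightarrow> cmp (cmp f a) b = cmp f (cmp a b)"
  using cmp_assoc[OF A A A S] subgroup_subset by (metis subsetD)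

lemma precomp_cancel:
  assumes "f \<in> hom A S" "a \<in> H"
  obtains a' where "a' \<in> H" "cmp (cmp f a) a' = f"
proof -
  obtain a' where a': "a' \<in> H" "cmp a a' = ident A"
    using subgroup_inverse[OF assms(2)] by blast
  then have "cmp (cmp f a) a' = f"
    using assms precomp_assoc cmp_ident_right[OF A S] by simp
  with a'(1) show thesis
    by (rule that)
qed

lemma qmap_precomp:
  assumes f: "f \<in> hom A S" and a: "a \<in> H"
  shows "q (cmp f a) = q f"
proof -
  obtain a' where a': "a' \<in> H" "cmp (cmp f a) a' = f"
    using precomp_cancel[OF f a] .
  have "grel cmp H (cmp f a) h \<longleftrightarrow> grel cmp H f h" if h: "h \<in> hom A S" for h
  proof
    assume "grel cmp H (cmp f a) h"
    then obtain \<beta> where "\<beta> \<in> H" "cmp f a = cmp h \<beta>"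
      by (auto simp: grel_def)
    then have "f = cmp h (cmp \<beta> a')"
      using a' h precomp_assoc by metis
    with \<open>\<beta> \<in> H\<close> a' show "grel cmp H f h"
      by (auto simp: grel_def intro: cmp_in_subgroup)
  next
    assume "grel cmp H f h"
    then obtain \<beta> where "\<beta> \<in> H" "f = cmp h \<beta>"
      by (auto simp: grel_def)
    then have "cmp f a = cmp h (cmp \<beta> a)"
      using a h precomp_assoc by simp
    with \<open>\<beta> \<in> H\<close> a show "grel cmp H (cmp f a) h"
      by (auto simp: grel_def intro: cmp_in_subgroup)
  qed
  then show ?thesis
    by (auto simp: qmap_def)
qed

lemma qmap_eq_imp_precomp:
  assumes "f \<in> hom A S" "g \<in> hom A S" "q f = q g"
  shows "\<exists>a\<in>H. cmp f a = g"
proof -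
  have "f \<in> q f"
    using assms(1) ident_in_subgroup cmp_ident_right[OF A S]
    by (force simp: qmap_def grel_def)
  then have "f \<in> q g"
    using assms(3) by simp
  then obtain a where "a \<in> H" "g = cmp f a"
    by (auto simp: qmap_def grel_def)
  then show ?thesis
    by blast
qed

lemma hit_count_precomp:
  assumes f: "f \<in> hom A S" and b: "b \<in> H"
  shows "hit_count H (\<lambda>a f. cmp f a) B (cmp f b) = hit_count H (\<lambda>a f. cmp f a) B f"
proof -
  obtain b' where b': "b' \<in> H" "cmp b' b = ident A" "cmp b b' = ident A"
    using subgroup_inverse[OF b] by blast
  have cancel: "cmp c (cmp d a) = a" if "c \<in> H" "d \<in> H" "cmp c d = ident A" "a \<in> H" for c d a
    using that cmp_assoc[OF A A A A, of a d c] cmp_ident_left[OF A A, of a] subgroup_subset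
    by auto
  show ?thesis
    unfolding hit_count_def
  proof (rule sum.reindex_bij_witness[where i = "cmp b'" and j = "cmp b"])
    fix a assume a: "a \<in> H"
    show "cmp b a \<in> H" "cmp b' a \<in> H"
      using a b b' by (simp_all add: cmp_in_subgroup)
    show "cmp b' (cmp b a) = a" "cmp b (cmp b' a) = a"
      using a b b' by (simp_all add: cancel)
    show "indicator B (cmp f (cmp b a)) = indicator B (cmp (cmp f b) a)"
      using f b a by (simp add: precomp_assoc)
  qed
qed

theorem borel_sets_image_qmap:
  assumes "finite H" "W \<in> borel_sets_of (T A S)"
  shows "q ` W \<in> borel_sets_of (quot_topology (T A S) q)"
proof (rule borel_sets_image_quotient_finite_action[where \<phi> = "\<lambda>a f. cmp f a"])
  show "quotient_map (T A S) (quot_topology (T A S) q) q"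
    by (rule quotient_map_quot_topology)
  show "continuous_map (T A S) (T A S) (\<lambda>f. cmp f a)" if "a \<in> H" for a
    using that subgroup_subset by (auto intro: continuous_map_precomp[OF A S])
  show "q (cmp f a) = q f" if "a \<in> H" "f \<in> topspace (T A S)" for a f
    using that by (simp add: qmap_precomp topspace_hom[OF A S])
  show "\<exists>a\<in>H. cmp f a = g" if "f \<in> topspace (T A S)" "g \<in> topspace (T A S)" "q f = q g" for f g
    using that by (simp add: qmap_eq_imp_precomp topspace_hom[OF A S])
  show "hit_count H (\<lambda>a f. cmp f a) B f = hit_count H (\<lambda>a f. cmp f a) B g"
    if fg: "f \<in> topspace (T A S)" "g \<in> topspace (T A S)" "q f = q g" for B f g
  proof -
    obtain a where "a \<in> H" "g = cmp f a"
      using fg qmap_eq_imp_precomp[of f g] by (auto simp: topspace_hom[OF A S])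
    then show ?thesis
      using fg by (simp add: hit_count_precomp topspace_hom[OF A S])
  qed
qed (use assms in auto)

end

theorem lemma4p4:
  fixes Ob :: "'o set" and hom :: "'o \<Rightarrow> 'o \<Rightarrow> 'm set"
    and cmp :: "'m \<Rightarrow> 'm \<Rightarrow> 'm" and ident :: "'o \<Rightarrow> 'm"
    and T :: "'o \<Rightarrow> 'o \<Rightarrow> 'm topology" and G :: "'o \<Rightarrow> 'm set"
    and A S :: 'o and W :: "'m set"
  assumes cat: "top_enriched_category Ob hom cmp ident T"
    and G: "\<forall>B\<in>Ob. aut_subgroup hom cmp ident B (G B)"
    and A: "A \<in> Ob" and S: "S \<in> Ob"
    and lc: "locally_compact_space (T A S)"
    and sc: "second_countable (T A S)"
    and hd: "Hausdorff_space (T A S)"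
    and fin: "finite (Aut hom cmp ident A)"
    and disc: "subtopology (T A A) (Aut hom cmp ident A)
                 = discrete_topology (Aut hom cmp ident A)"
    and W: "W \<in> borel_sets_of (T A S)"
  shows "qmap (hom A S) cmp (G A) ` W
           \<in> borel_sets_of (quot_topology (T A S) (qmap (hom A S) cmp (G A)))"
proof -
  interpret hom_quotient Ob hom cmp ident T A S "G A"
    using cat A S G by (simp add: hom_quotient_def hom_quotient_axioms_def top_enriched_def)
  have "G A \<subseteq> Aut hom cmp ident A"
    using G A by (simp add: aut_subgroup_def)
  then have "finite (G A)"
    using fin by (rule finite_subset)
  then show ?thesis
    using W by (rule borel_sets_image_qmap)
qed

end
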